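(* (i) Every flat and every semibundle of $\mathfrak M$ is a $\boldsymbol\pi$-clique. (ii) Every semiflat and every proper semibundle of $\mathfrak M$ is a $\boldsymbol\rho$-clique.
   Context: Setup. Let $V$ be a vector space of finite dimension $n\ge 3$ over a division ring; $\mathrm{Sub}_j(V)$ is the set of $j$-dimensional subspaces of $V$. Fix $k$ with $1<k<n-1$, a subspace $W$ of $V$ with $w:=\dim W$, and an integer $m$ with $k-(n-w)\le m\le\min\{k,w\}$. For $H\in\mathrm{Sub}_{k-1}(V)$, $B\in\mathrm{Sub}_{k+1}(V)$, $H\subset B$, the $k$-pencil is $\mathbf p(H,B)=\{U\in\mathrm{Sub}_k(V):H\subset U\subset B\}$; the Grassmann space $\mathbf P_k(V)$ has points $\mathrm{Sub}_k(V)$ and lines the $k$-pencils. The spine space $\mathfrak M$ has point set $S=\{U\in\mathrm{Sub}_k(V):\dim(U\cap W)=m\}$ and line set $\mathcal L=\{\ell\cap S:\ell\text{ a $k$-pencil},\ |\ell\cap S|\ge2\}$; points of $\mathrm{Sub}_k(V)\setminus S$ are improper. Each $L\in\mathcal L$ lies in a unique $k$-pencil $\overline L$; $L$ is projective if $L=\overline L$, affine if $|\overline L\setminus L|=1$. Affine lines are parallel if their closures meet in an improper point. A subspace of $\mathfrak M$ is a set $X\subseteq S$ containing every line that meets it in at least two points; it is strong if its points are pairwise collinear; $\overline X$ denotes the smallest subspace of $\mathbf P_k(V)$ containing $X$. A plane of $\mathbf P_k(V)$ is a set $\{U\in\mathrm{Sub}_k(V):Y\subset U\subset Z\}$ with $(\dim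 Y,\dim Z)=(k-2,k+1)$ or $(k-1,k+2)$; a plane of $\mathfrak M$ is $E=P\cap S$ with $P$ a plane of $\mathbf P_k(V)$, containing two distinct lines; $\overline E=P$, and $E$ is projective, punctured or affine according as $P\setminus E$ is empty, a point, or a line. $L_1\,\boldsymbol\pi\,L_2$ iff some plane contains both lines. For a plane $E$ and $U\in\overline E$, $\mathbf p(U,E)=\{L\in\mathcal L:U\in\overline L\subseteq\overline E\}$ is a pencil of lines if $U\in S$ and a parallel pencil if $U\notin S$; $L_1\,\boldsymbol\rho\,L_2$ iff both belong to a common pencil of lines (proper vertex). A $\delta$-clique is a set of lines pairwise $\delta$-related. A flat is $\mathcal L(E)=\{L\in\mathcal L:L\subseteq E\}$ for a plane $E$; a semiflat on $E$ is the set of all projective lines contained in $E$ together with an inclusion-maximal set of pairwise non-parallel affine lines contained in $E$. For a strong subspace $X$ and $U\in\overline X$, the semibundle is $\mathcal L_U(X)=\{L\in\mathcal L:U\in\overline L,\ L\subseteq X\}$; it is proper if $U\in S$. *)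

theory Defs
  imports Main
begin

text \<open>The vector space V of dimension n over a division ring 'a is modelled as the
  left 'a-vector space of coordinate vectors v :: nat => 'a vanishing from index n on
  (every n-dimensional vector space over 'a is isomorphic to it).\<close>

type_synonym 'a vec = "nat \<Rightarrow> 'a"

definition vspace :: "nat \<Rightarrow> ('a::division_ring) vec set" where
  "vspace n = {v. \<forall>i\<ge>n. v i = 0}"

definition lincomb :: "('a::division_ring vec \<Rightarrow> 'a) \<Rightarrow> 'a vec set \<Rightarrow> 'a vec" where
  "lincomb c S = (\<lambda>i. \<Sum>v\<in>S. c v * v i)"

definition lin_indep :: "('a::division_ring) vec set \<Rightarrow> bool" where
  "lin_indep S \<longleftrightarrow> finite S \<and> (\<forall>c. lincomb c S = (\<lambda>_. 0) \<longrightarrow> (\<forall>v\<in>S. c v = 0))"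

definition span :: "('a::division_ring) vec set \<Rightarrow> 'a vec set" where
  "span S = {lincomb c S | c. True}"

definition is_subspace :: "nat \<Rightarrow> ('a::division_ring) vec set \<Rightarrow> bool" where
  "is_subspace n U \<longleftrightarrow> U \<subseteq> vspace n \<and> (\<lambda>_. 0) \<in> U \<and>
     (\<forall>x\<in>U. \<forall>y\<in>U. (\<lambda>i. x i + y i) \<in> U) \<and> (\<forall>c. \<forall>x\<in>U. (\<lambda>i. c * x i) \<in> U)"

definition has_dim :: "('a::division_ring) vec set \<Rightarrow> nat \<Rightarrow> bool" where
  "has_dim U j \<longleftrightarrow> (\<exists>B. B \<subseteq> U \<and> lin_indep B \<and> card B = j \<and> span B = U)"

definition Sub :: "nat \<Rightarrow> nat \<Rightarrow> ('a::division_ring) vec set set" where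
  "Sub n j = {U. is_subspace n U \<and> has_dim U j}"

definition kpencil :: "nat \<Rightarrow> nat \<Rightarrow> ('a::division_ring) vec set \<Rightarrow> 'a vec set \<Rightarrow> 'a vec set set" where
  "kpencil n k H B = {U \<in> Sub n k. H \<subseteq> U \<and> U \<subseteq> B}"

definition is_kpencil :: "nat \<Rightarrow> nat \<Rightarrow> ('a::division_ring) vec set set \<Rightarrow> bool" where
  "is_kpencil n k l \<longleftrightarrow> (\<exists>H B. H \<in> Sub n (k - 1) \<and> B \<in> Sub n (k + 1) \<and> H \<subseteq> B \<and> l = kpencil n k H B)"

definition kplane :: "nat \<Rightarrow> nat \<Rightarrow> ('a::division_ring) vec set set \<Rightarrow> bool" where
  "kplane n k P \<longleftrightarrow> (\<exists>Y Z. Y \<subseteq> Z \<and>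
      ((Y \<in> Sub n (k - 2) \<and> Z \<in> Sub n (k + 1)) \<or> (Y \<in> Sub n (k - 1) \<and> Z \<in> Sub n (k + 2))) \<and>
      P = {U \<in> Sub n k. Y \<subseteq> U \<and> U \<subseteq> Z})"

definition Pk_subspace :: "nat \<Rightarrow> nat \<Rightarrow> ('a::division_ring) vec set set \<Rightarrow> bool" where
  "Pk_subspace n k Y \<longleftrightarrow> Y \<subseteq> Sub n k \<and>
     (\<forall>l. is_kpencil n k l \<and> (\<exists>a b. a \<noteq> b \<and> a \<in> l \<inter> Y \<and> b \<in> l \<inter> Y) \<longrightarrow> l \<subseteq> Y)"

definition pclos :: "nat \<Rightarrow> nat \<Rightarrow> ('a::division_ring) vec set set \<Rightarrow> 'a vec set set" where
  "pclos n k X = \<Inter>{Y. Pk_subspace n k Y \<and> X \<subseteq> Y}"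

section \<open>Spine space M = M(n,k,W,m)\<close>

definition pts :: "nat \<Rightarrow> nat \<Rightarrow> ('a::division_ring) vec set \<Rightarrow> nat \<Rightarrow> 'a vec set set" where
  "pts n k W m = {U \<in> Sub n k. has_dim (U \<inter> W) m}"

definition lines :: "nat \<Rightarrow> nat \<Rightarrow> ('a::division_ring) vec set \<Rightarrow> nat \<Rightarrow> 'a vec set set set" where
  "lines n k W m = {l \<inter> pts n k W m | l. is_kpencil n k l \<and>
      (\<exists>a b. a \<noteq> b \<and> a \<in> l \<inter> pts n k W m \<and> b \<in> l \<inter> pts n k W m)}"

definition lclos :: "nat \<Rightarrow> nat \<Rightarrow> ('a::division_ring) vec set set \<Rightarrow> 'a vec set set" where
  "lclos n k L = (THE l. is_kpencil n k l \<and> L \<subseteq> l)"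

definition proj_line :: "nat \<Rightarrow> nat \<Rightarrow> ('a::division_ring) vec set \<Rightarrow> nat \<Rightarrow> 'a vec set set \<Rightarrow> bool" where
  "proj_line n k W m L \<longleftrightarrow> L \<in> lines n k W m \<and> L = lclos n k L"

definition aff_line :: "nat \<Rightarrow> nat \<Rightarrow> ('a::division_ring) vec set \<Rightarrow> nat \<Rightarrow> 'a vec set set \<Rightarrow> bool" where
  "aff_line n k W m L \<longleftrightarrow> L \<in> lines n k W m \<and> (\<exists>U. lclos n k L - L = {U})"

definition parallel :: "nat \<Rightarrow> nat \<Rightarrow> ('a::division_ring) vec set \<Rightarrow> nat \<Rightarrow> 'a vec set set \<Rightarrow> 'a vec set set \<Rightarrow> bool" where
  "parallel n k W m L1 L2 \<longleftrightarrow> aff_line n k W m L1 \<and> aff_line n k W m L2 \<and>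
     (\<exists>U. U \<in> lclos n k L1 \<and> U \<in> lclos n k L2 \<and> U \<notin> pts n k W m)"

definition mplane_over :: "nat \<Rightarrow> nat \<Rightarrow> ('a::division_ring) vec set \<Rightarrow> nat \<Rightarrow> 'a vec set set \<Rightarrow> 'a vec set set \<Rightarrow> bool" where
  "mplane_over n k W m P E \<longleftrightarrow> kplane n k P \<and> E = P \<inter> pts n k W m \<and>
     (\<exists>L1 L2. L1 \<in> lines n k W m \<and> L2 \<in> lines n k W m \<and> L1 \<noteq> L2 \<and> L1 \<subseteq> E \<and> L2 \<subseteq> E)"

definition mplane :: "nat \<Rightarrow> nat \<Rightarrow> ('a::division_ring) vec set \<Rightarrow> nat \<Rightarrow> 'a vec set set \<Rightarrow> bool" where
  "mplane n k W m E \<longleftrightarrow> (\<exists>P. mplane_over n k W m P E)"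

definition pi_rel :: "nat \<Rightarrow> nat \<Rightarrow> ('a::division_ring) vec set \<Rightarrow> nat \<Rightarrow> 'a vec set set \<Rightarrow> 'a vec set set \<Rightarrow> bool" where
  "pi_rel n k W m L1 L2 \<longleftrightarrow> L1 \<in> lines n k W m \<and> L2 \<in> lines n k W m \<and>
     (\<exists>E. mplane n k W m E \<and> L1 \<subseteq> E \<and> L2 \<subseteq> E)"

definition line_pencil :: "nat \<Rightarrow> nat \<Rightarrow> ('a::division_ring) vec set \<Rightarrow> nat \<Rightarrow> 'a vec set set \<Rightarrow> 'a vec set \<Rightarrow> 'a vec set set set" where
  "line_pencil n k W m P U = {L \<in> lines n k W m. U \<in> lclos n k L \<and> lclos n k L \<subseteq> P}"

definition rho_rel :: "nat \<Rightarrow> nat \<Rightarrow> ('a::division_ring) vec set \<Rightarrow> nat \<Rightarrow> 'a vec set set \<Rightarrow> 'a vec set set \<Rightarrow> bool" where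
  "rho_rel n k W m L1 L2 \<longleftrightarrow> (\<exists>P E U. mplane_over n k W m P E \<and> U \<in> P \<and> U \<in> pts n k W m \<and>
      L1 \<in> line_pencil n k W m P U \<and> L2 \<in> line_pencil n k W m P U)"

definition clique :: "('b \<Rightarrow> 'b \<Rightarrow> bool) \<Rightarrow> 'b set \<Rightarrow> bool" where
  "clique R C \<longleftrightarrow> (\<forall>L1\<in>C. \<forall>L2\<in>C. L1 \<noteq> L2 \<longrightarrow> R L1 L2)"

definition flat :: "nat \<Rightarrow> nat \<Rightarrow> ('a::division_ring) vec set \<Rightarrow> nat \<Rightarrow> 'a vec set set \<Rightarrow> 'a vec set set set" where
  "flat n k W m E = {L \<in> lines n k W m. L \<subseteq> E}"

definition nonpar_aff :: "nat \<Rightarrow> nat \<Rightarrow> ('a::division_ring) vec set \<Rightarrow> nat \<Rightarrow> 'a vec set set \<Rightarrow> 'a vec set set set \<Rightarrow> bool" where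
  "nonpar_aff n k W m E A \<longleftrightarrow> (\<forall>L\<in>A. aff_line n k W m L \<and> L \<subseteq> E) \<and>
     (\<forall>L1\<in>A. \<forall>L2\<in>A. L1 \<noteq> L2 \<longrightarrow> \<not> parallel n k W m L1 L2)"

definition semiflat_on :: "nat \<Rightarrow> nat \<Rightarrow> ('a::division_ring) vec set \<Rightarrow> nat \<Rightarrow> 'a vec set set \<Rightarrow> 'a vec set set set \<Rightarrow> bool" where
  "semiflat_on n k W m E F \<longleftrightarrow> mplane n k W m E \<and>
     (\<exists>A. nonpar_aff n k W m E A \<and> (\<forall>A'. nonpar_aff n k W m E A' \<and> A \<subseteq> A' \<longrightarrow> A' = A) \<and>
          F = {L \<in> lines n k W m. proj_line n k W m L \<and> L \<subseteq> E} \<union> A)"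

definition M_subspace :: "nat \<Rightarrow> nat \<Rightarrow> ('a::division_ring) vec set \<Rightarrow> nat \<Rightarrow> 'a vec set set \<Rightarrow> bool" where
  "M_subspace n k W m X \<longleftrightarrow> X \<subseteq> pts n k W m \<and>
     (\<forall>L\<in>lines n k W m. (\<exists>a b. a \<noteq> b \<and> a \<in> L \<inter> X \<and> b \<in> L \<inter> X) \<longrightarrow> L \<subseteq> X)"

definition strong_subspace :: "nat \<Rightarrow> nat \<Rightarrow> ('a::division_ring) vec set \<Rightarrow> nat \<Rightarrow> 'a vec set set \<Rightarrow> bool" where
  "strong_subspace n k W m X \<longleftrightarrow> M_subspace n k W m X \<and>
     (\<forall>a\<in>X. \<forall>b\<in>X. a \<noteq> b \<longrightarrow> (\<exists>L\<in>lines n k W m. a \<in> L \<and> b \<in> L))"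

definition semibundle :: "nat \<Rightarrow> nat \<Rightarrow> ('a::division_ring) vec set \<Rightarrow> nat \<Rightarrow> 'a vec set set \<Rightarrow> 'a vec set \<Rightarrow> 'a vec set set set" where
  "semibundle n k W m X U = {L \<in> lines n k W m. U \<in> lclos n k L \<and> L \<subseteq> X}"

end

theory Submission
  imports Defs
begin

text \<open>Two distinct \<open>k\<close>-pencils through a common point lie in a common plane of \<open>P_k(V)\<close>
  exactly when they share their vertex or their base. For two lines of a semibundle with vertex
  \<open>U\<close> in a strong subspace, points \<open>a \<noteq> U\<close> and \<open>b \<noteq> U\<close> on them are joined by a third
  pencil; if the vertices differed, \<open>U\<close> would be their join and the third pencil's base would
  contain \<open>U\<close>, \<open>a\<close> and \<open>b\<close>, so both bases coincide with it. Within a plane of \<open>P_k(V)\<close> any two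
  lines meet; for a semiflat the meeting point is proper, since it can only be improper for two
  parallel affine lines.\<close>

section \<open>Dimension of subspaces\<close>

lemma lincomb_insert:
  "finite S \<Longrightarrow> x \<notin> S \<Longrightarrow> lincomb c (insert x S) = (\<lambda>i. c x * x i + lincomb c S i)"
  by (simp add: lincomb_def)

lemma lin_indep_finite: "lin_indep S \<Longrightarrow> finite S"
  by (simp add: lin_indep_def)

lemma subspace_add: "is_subspace n A \<Longrightarrow> a \<in> A \<Longrightarrow> b \<in> A \<Longrightarrow> (\<lambda>i. a i + b i) \<in> A"
  unfolding is_subspace_def by blast

lemma subspace_scale: "is_subspace n A \<Longrightarrow> a \<in> A \<Longrightarrow> (\<lambda>i. c * a i) \<in> A"
  unfolding is_subspace_def by blast

lemma subspace_zero: "is_subspace n A \<Longrightarrow> (\<lambda>_. 0) \<in> A"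
  unfolding is_subspace_def by blast

lemma subspace_vspace: "is_subspace n A \<Longrightarrow> A \<subseteq> vspace n"
  unfolding is_subspace_def by blast

lemma subspace_add_scale:
  "is_subspace n A \<Longrightarrow> a \<in> A \<Longrightarrow> b \<in> A \<Longrightarrow> (\<lambda>i. a i + c * b i) \<in> A"
  using subspace_add subspace_scale by fastforce

lemma subspace_Int: "is_subspace n A \<Longrightarrow> is_subspace n C \<Longrightarrow> is_subspace n (A \<inter> C)"
  unfolding is_subspace_def by blast

lemma span_subset_subspace:
  assumes "finite S" "S \<subseteq> A" "is_subspace n A"
  shows "span S \<subseteq> A"
proof -
  have "lincomb c S \<in> A" for c
    using assms(1,2)
  proof (induction S rule: finite_induct)
    case empty
    then show ?case using subspace_zero[OF assms(3)] by (simp add: lincomb_def)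
  next
    case (insert x S)
    then have "(\<lambda>i. c x * x i + lincomb c S i) \<in> A"
      using subspace_add[OF assms(3) subspace_scale[OF assms(3)]] by simp
    then show ?case using insert by (simp add: lincomb_insert)
  qed
  then show ?thesis by (auto simp: span_def)
qed

lemma span_iff: "v \<in> span S \<longleftrightarrow> (\<exists>c. v = lincomb c S)"
  by (auto simp: span_def)

lemma in_span: assumes "finite S" "v \<in> S" shows "v \<in> span S"
proof -
  have "lincomb (\<lambda>w. if w = v then 1 else 0) S = v"
  proof
    fix i
    have "lincomb (\<lambda>w. if w = v then 1 else 0) S i = (\<Sum>w\<in>S. if w = v then v i else 0)"
      unfolding lincomb_def by (rule sum.cong) auto
    then show "lincomb (\<lambda>w. if w = v then 1 else 0) S i = v i" using assms by simp
  qed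
  then show ?thesis unfolding span_iff by metis
qed

lemma span_insert_eliminate:
  assumes "finite S" "s \<notin> S" "cv s \<noteq> 0"
  shows "(\<lambda>i. lincomb cu (insert s S) i - cu s * inverse (cv s) * lincomb cv (insert s S) i)
           \<in> span S"
proof -
  define r where "r = cu s * inverse (cv s)"
  have r: "r * cv s = cu s"
    using assms(3) by (simp add: r_def mult.assoc)
  have "lincomb cu (insert s S) i - r * lincomb cv (insert s S) i
          = lincomb (\<lambda>v. cu v - r * cv v) S i" for i
  proof -
    have "r * (cv s * s i) = cu s * s i"
      by (simp add: r flip: mult.assoc)
    then show ?thesis
      using assms(1,2)
      by (simp add: lincomb_insert lincomb_def distrib_left left_diff_distrib mult.assoc
          sum_subtractf sum_distrib_left)
  qed
  then show ?thesis unfolding span_iff r_def by fast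
qed

lemma vanishing_combination_lift:
  fixes t :: "'b \<Rightarrow> ('a::division_ring) vec"
  assumes "finite I" "j0 \<in> I"
    and "\<forall>i. (\<Sum>j\<in>I - {j0}. c j * (t j i - r j * t j0 i)) = 0"
  shows "(\<Sum>j\<in>I. (if j = j0 then - (\<Sum>j\<in>I - {j0}. c j * r j) else c j) * t j i) = 0"
proof -
  have "(\<Sum>j\<in>J. c j * (t j i - r j * t j0 i))
          = (\<Sum>j\<in>J. c j * t j i) - (\<Sum>j\<in>J. c j * r j) * t j0 i" for J
    by (simp add: right_diff_distrib sum_subtractf sum_distrib_right mult.assoc)
  then have "(\<Sum>j\<in>I - {j0}. c j * t j i) - (\<Sum>j\<in>I - {j0}. c j * r j) * t j0 i = 0"
    using assms(3) by metis
  then have "(\<Sum>j\<in>I - {j0}. c j * t j i) = (\<Sum>j\<in>I - {j0}. c j * r j) * t j0 i"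
    by simp
  moreover have "(\<Sum>j\<in>I - {j0}. (if j = j0 then - (\<Sum>j\<in>I - {j0}. c j * r j) else c j) * t j i)
                 = (\<Sum>j\<in>I - {j0}. c j * t j i)"
    by (rule sum.cong) auto
  ultimately show ?thesis
    using assms(1,2) by (simp add: sum.remove)
qed

lemma span_family_dependent:
  fixes S :: "('a::division_ring) vec set"
  assumes "finite S" "finite I" "card S < card I" "\<forall>j\<in>I. t j \<in> span S"
  shows "\<exists>c. (\<exists>j\<in>I. c j \<noteq> 0) \<and> (\<forall>i. (\<Sum>j\<in>I. c j * t j i) = 0)"
  using assms
proof (induction S arbitrary: I t rule: finite_induct)
  case empty
  then obtain j0 where j0: "j0 \<in> I" by fastforce
  have "\<forall>j\<in>I. t j = (\<lambda>_. 0)" using empty by (auto simp: span_def lincomb_def)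
  then show ?case using j0 by (intro exI[of _ "\<lambda>j. if j = j0 then 1 else 0"]) auto
next
  case (insert s S I t)
  have "\<forall>j\<in>I. \<exists>c. t j = lincomb c (insert s S)"
    using insert.prems(3) by (simp add: span_iff)
  then obtain C where C: "\<forall>j\<in>I. t j = lincomb (C j) (insert s S)"
    by (rule bchoice[THEN exE])
  show ?case
  proof (cases "\<forall>j\<in>I. C j s = 0")
    case True
    then have "\<forall>j\<in>I. t j = lincomb (C j) S"
      using C insert.hyps by (simp add: lincomb_insert)
    then have "\<forall>j\<in>I. t j \<in> span S" by (auto simp: span_iff)
    then show ?thesis using insert by simp
  next
    case False
    then obtain j0 where j0: "j0 \<in> I" "C j0 s \<noteq> 0" by blast
    define r where "r j = C j s * inverse (C j0 s)" for j
    have "\<forall>j\<in>I - {j0}. (\<lambda>i. t j i - r j * t j0 i) \<in> span S"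
      using span_insert_eliminate[where cv = "C j0", OF insert.hyps j0(2)] C j0(1) by (simp add: r_def)
    moreover have "card S < card (I - {j0})" using insert j0 by simp
    ultimately obtain c where c: "\<exists>j\<in>I - {j0}. c j \<noteq> 0"
        "\<forall>i. (\<Sum>j\<in>I - {j0}. c j * (t j i - r j * t j0 i)) = 0"
      using insert.IH[of "I - {j0}" "\<lambda>j i. t j i - r j * t j0 i"] insert.prems(1) by auto
    show ?thesis
      using vanishing_combination_lift[OF insert.prems(1) j0(1) c(2)] c(1)
      by (intro exI[of _ "\<lambda>j. if j = j0 then - (\<Sum>j\<in>I - {j0}. c j * r j) else c j"]) auto
  qed
qed

lemma lin_indep_card_le_span:
  assumes "lin_indep T" "finite S" "T \<subseteq> span S"
  shows "card T \<le> card S"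
proof (rule ccontr)
  assume "\<not> ?thesis"
  then obtain c where c: "\<exists>j\<in>T. c j \<noteq> 0" "\<forall>i. (\<Sum>j\<in>T. c j * j i) = 0"
    using span_family_dependent[OF assms(2) lin_indep_finite[OF assms(1)], of "\<lambda>x. x"] assms(3)
    by fastforce
  have "lincomb c T = (\<lambda>_. 0)" using c(2) by (simp add: lincomb_def)
  then show False using assms(1) c(1) by (simp add: lin_indep_def)
qed

lemma lin_indep_insert:
  assumes "lin_indep S" "x \<notin> span S"
  shows "lin_indep (insert x S)"
  unfolding lin_indep_def
proof (intro conjI allI impI)
  have fin: "finite S" using assms(1) by (rule lin_indep_finite)
  have xS: "x \<notin> S" using assms(2) in_span[OF fin] by blast
  show "finite (insert x S)" using fin by simp
  fix c assume "lincomb c (insert x S) = (\<lambda>_. 0)"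
  then have eq: "c x * x i + lincomb c S i = 0" for i
    using fin xS by (metis lincomb_insert)
  have cx: "c x = 0"
  proof (rule ccontr)
    assume ne: "c x \<noteq> 0"
    have "x i = lincomb (\<lambda>v. - (inverse (c x) * c v)) S i" for i
    proof -
      have "x i = - (inverse (c x) * lincomb c S i)"
        using arg_cong[OF eq[of i], of "\<lambda>y. inverse (c x) * y"] ne
        by (simp add: distrib_left mult.assoc[symmetric] eq_neg_iff_add_eq_0)
      then show ?thesis by (simp add: lincomb_def sum_distrib_left mult.assoc sum_negf)
    qed
    then have "x \<in> span S" unfolding span_iff by fast
    then show False using assms(2) by blast
  qed
  have "lincomb c S = (\<lambda>_. 0)" using eq cx by auto
  then show "\<forall>v\<in>insert x S. c v = 0" using assms(1) cx by (simp add: lin_indep_def)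
qed

definition unit_vec :: "nat \<Rightarrow> ('a::division_ring) vec" where
  "unit_vec j = (\<lambda>i. if i = j then 1 else 0)"

lemma inj_unit_vec: "inj (unit_vec :: nat \<Rightarrow> ('a::division_ring) vec)"
  by (rule injI) (metis unit_vec_def zero_neq_one)

lemma vspace_subset_span_unit_vecs:
  "vspace n \<subseteq> span (unit_vec ` {..<n} :: ('a::division_ring) vec set)"
proof
  fix v :: "'a vec" assume v: "v \<in> vspace n"
  define c where "c w = v (inv unit_vec w)" for w :: "'a vec"
  have "lincomb c (unit_vec ` {..<n}) = v"
  proof
    fix i
    have "lincomb c (unit_vec ` {..<n}) i = (\<Sum>j<n. v j * unit_vec j i)"
      unfolding lincomb_def c_def
      by (simp add: sum.reindex inj_on_subset[OF inj_unit_vec] inv_f_f[OF inj_unit_vec])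
    also have "\<dots> = (\<Sum>j<n. if i = j then v i else 0)"
      by (rule sum.cong) (auto simp: unit_vec_def)
    also have "\<dots> = v i" using v by (simp add: vspace_def)
    finally show "lincomb c (unit_vec ` {..<n}) i = v i" .
  qed
  then show "v \<in> span (unit_vec ` {..<n})" unfolding span_def by blast
qed

lemma lin_indep_card_le_dim:
  assumes "lin_indep B" "B \<subseteq> vspace n"
  shows "card B \<le> n"
proof -
  have "card B \<le> card (unit_vec ` {..<n} :: ('a::division_ring) vec set)"
    using lin_indep_card_le_span[OF assms(1)] vspace_subset_span_unit_vecs assms(2) by blast
  also have "\<dots> \<le> n" using card_image_le[of "{..<n}" unit_vec] by simp
  finally show ?thesis .
qed

text \<open>A maximal independent subset is a basis; maximal ones exist since independent
  subsets of \<open>vspace n\<close> have at most \<open>n\<close> elements.\<close>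
lemma subspace_has_dim:
  assumes "is_subspace n (A :: ('a::division_ring) vec set)"
  obtains j where "has_dim A j"
proof -
  let ?K = "card ` {B. B \<subseteq> A \<and> lin_indep B}"
  have "?K \<subseteq> {..n}"
    using lin_indep_card_le_dim subspace_vspace[OF assms] by fastforce
  then have finK: "finite ?K" using finite_subset by blast
  have "lin_indep ({} :: 'a vec set)" by (simp add: lin_indep_def)
  then have "0 \<in> ?K" by force
  then have "Max ?K \<in> ?K" using finK Max_in by blast
  then obtain B where B: "B \<subseteq> A" "lin_indep B" "card B = Max ?K" by auto
  have finB: "finite B" using B(2) by (rule lin_indep_finite)
  have "A \<subseteq> span B"
  proof
    fix x assume xA: "x \<in> A"
    show "x \<in> span B"
    proof (rule ccontr)
      assume nx: "x \<notin> span B"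
      then have "card (insert x B) \<in> ?K"
        using lin_indep_insert[OF B(2)] xA B(1) by blast
      then have "card (insert x B) \<le> card B" using finK B(3) by simp
      moreover have "x \<notin> B" using nx in_span[OF finB] by blast
      ultimately show False using finB by simp
    qed
  qed
  then have "span B = A" using span_subset_subspace[OF finB B(1) assms] by blast
  then show ?thesis using that B unfolding has_dim_def by blast
qed

lemma has_dimE:
  assumes "has_dim A j"
  obtains B where "B \<subseteq> A" "lin_indep B" "card B = j" "span B = A"
  using assms unfolding has_dim_def by blast

lemma has_dim_mono:
  assumes "has_dim A j" "has_dim C j'" "A \<subseteq> C"
  shows "j \<le> j'"
proof -
  obtain BA where BA: "BA \<subseteq> A" "lin_indep BA" "card BA = j"
    using assms(1) by (rule has_dimE)
  obtain BC where BC: "lin_indep BC" "card BC = j'" "span BC = C"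
    using assms(2) by (rule has_dimE)
  have "BA \<subseteq> span BC" using BA(1) BC(3) assms(3) by blast
  then show ?thesis
    using lin_indep_card_le_span[OF BA(2) lin_indep_finite[OF BC(1)]] BA(3) BC(2) by simp
qed

lemma has_dim_strict_mono:
  assumes "has_dim A j" "has_dim C j'" "A \<subset> C"
  shows "j < j'"
proof -
  obtain BA where BA: "BA \<subseteq> A" "lin_indep BA" "card BA = j" "span BA = A"
    using assms(1) by (rule has_dimE)
  obtain BC where BC: "lin_indep BC" "card BC = j'" "span BC = C"
    using assms(2) by (rule has_dimE)
  obtain x where x: "x \<in> C" "x \<notin> A" using assms(3) by blast
  have "lin_indep (insert x BA)" using lin_indep_insert[OF BA(2)] x(2) BA(4) by simp
  moreover have "insert x BA \<subseteq> span BC" using BA(1) BC(3) x(1) assms(3) by blast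
  ultimately have "card (insert x BA) \<le> j'"
    using lin_indep_card_le_span lin_indep_finite[OF BC(1)] BC(2) by blast
  moreover have "x \<notin> BA" using x BA(1) by blast
  ultimately show ?thesis using BA(2,3) lin_indep_finite by fastforce
qed

lemma has_dim_subset_eq: "has_dim A j \<Longrightarrow> has_dim C j \<Longrightarrow> A \<subseteq> C \<Longrightarrow> A = C"
  using has_dim_strict_mono by blast

lemma has_dim_Suc_between:
  assumes "is_subspace n M" "has_dim A j" "has_dim C (Suc j)" "A \<subseteq> M" "M \<subseteq> C"
  shows "M = A \<or> M = C"
proof -
  obtain d where d: "has_dim M d" using subspace_has_dim[OF assms(1)] .
  have "j \<le> d" "d \<le> Suc j"
    using has_dim_mono d assms by blast+
  then consider "d = j" | "d = Suc j" by linarith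
  then show ?thesis
  proof cases
    case 1
    then have "A = M" using has_dim_subset_eq d assms(2,4) by blast
    then show ?thesis by simp
  next
    case 2
    then have "M = C" using has_dim_subset_eq d assms(3,5) by blast
    then show ?thesis by simp
  qed
qed

lemma has_dim_Suc_subsetI:
  assumes "is_subspace n S" "is_subspace n T" "has_dim X j" "has_dim T (Suc j)" "X \<subset> S \<inter> T"
  shows "T \<subseteq> S"
  using has_dim_Suc_between[OF subspace_Int[OF assms(1,2)] assms(3,4)] assms(5) by blast

section \<open>Adjoining a vector\<close>

definition adjoin :: "('a::division_ring) vec set \<Rightarrow> 'a vec \<Rightarrow> 'a vec set" where
  "adjoin A x = {v. \<exists>a\<in>A. \<exists>c. v = (\<lambda>i. a i + c * x i)}"

lemma adjoinI: "a \<in> A \<Longrightarrow> v = (\<lambda>i. a i + c * x i) \<Longrightarrow> v \<in> adjoin A x"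
  unfolding adjoin_def by blast

lemma adjoinE:
  assumes "v \<in> adjoin A x"
  obtains a c where "a \<in> A" "v = (\<lambda>i. a i + c * x i)"
  using assms unfolding adjoin_def by blast

lemma subspace_adjoin:
  assumes A: "is_subspace n A" and x: "x \<in> vspace n"
  shows "is_subspace n (adjoin A x)"
  unfolding is_subspace_def
proof (intro conjI ballI allI)
  show "adjoin A x \<subseteq> vspace n"
    using subspace_vspace[OF A] x by (fastforce simp: vspace_def elim: adjoinE)
  show "(\<lambda>_. 0) \<in> adjoin A x"
    using subspace_zero[OF A] by (rule adjoinI[where c = 0]) simp
next
  fix v w assume "v \<in> adjoin A x" "w \<in> adjoin A x"
  then obtain a c b d where "a \<in> A" "v = (\<lambda>i. a i + c * x i)" "b \<in> A" "w = (\<lambda>i. b i + d * x i)"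
    by (auto elim!: adjoinE)
  moreover from this have ab: "(\<lambda>i. a i + b i) \<in> A" using subspace_add[OF A] by blast
  ultimately show "(\<lambda>i. v i + w i) \<in> adjoin A x"
    by (intro adjoinI[OF ab, where c = "c + d"]) (auto simp: algebra_simps)
next
  fix e v assume "v \<in> adjoin A x"
  then obtain a c where "a \<in> A" "v = (\<lambda>i. a i + c * x i)" by (rule adjoinE)
  moreover from this have ea: "(\<lambda>i. e * a i) \<in> A" using subspace_scale[OF A] by blast
  ultimately show "(\<lambda>i. e * v i) \<in> adjoin A x"
    by (intro adjoinI[OF ea, where c = "e * c"]) (auto simp: algebra_simps)
qed

lemma subset_adjoin: "A \<subseteq> adjoin A x"
  by (auto intro: adjoinI[where c = 0])

lemma mem_adjoin: "is_subspace n A \<Longrightarrow> x \<in> adjoin A x"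
  by (rule adjoinI[where c = 1, OF subspace_zero]) simp_all

lemma adjoin_subset:
  assumes "is_subspace n S" "A \<subseteq> S" "x \<in> S"
  shows "adjoin A x \<subseteq> S"
  using assms subspace_add_scale by (fastforce elim: adjoinE)

lemma has_dim_adjoin:
  assumes "has_dim A j" "x \<notin> A"
  shows "has_dim (adjoin A x) (Suc j)"
proof -
  obtain B where B: "B \<subseteq> A" "lin_indep B" "card B = j" "span B = A"
    using assms(1) by (rule has_dimE)
  have finB: "finite B" using B(2) by (rule lin_indep_finite)
  have xB: "x \<notin> B" using B(1) assms(2) by blast
  have span: "span (insert x B) = adjoin A x"
  proof
    show "span (insert x B) \<subseteq> adjoin A x"
    proof
      fix v assume "v \<in> span (insert x B)"
      then obtain c where "v = lincomb c (insert x B)" unfolding span_iff by blast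
      then have "v = (\<lambda>i. lincomb c B i + c x * x i)"
        using lincomb_insert[OF finB xB] by (simp add: add.commute)
      moreover have "lincomb c B \<in> A" using B(4) span_iff by blast
      ultimately show "v \<in> adjoin A x" by (rule adjoinI[rotated])
    qed
    show "adjoin A x \<subseteq> span (insert x B)"
    proof
      fix v assume "v \<in> adjoin A x"
      then obtain a c where ac: "a \<in> A" "v = (\<lambda>i. a i + c * x i)" by (rule adjoinE)
      then obtain d where d: "a = lincomb d B" using B(4) span_iff by blast
      have "lincomb (d(x := c)) B = lincomb d B"
        unfolding lincomb_def using xB by (intro ext sum.cong) auto
      then have "v = lincomb (d(x := c)) (insert x B)"
        using lincomb_insert[OF finB xB, of "d(x := c)"] ac d by (auto simp: add.commute)
      then show "v \<in> span (insert x B)" unfolding span_iff by blast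
    qed
  qed
  moreover have "lin_indep (insert x B)"
    using lin_indep_insert[OF B(2)] assms(2) B(4) by simp
  moreover have "insert x B \<subseteq> adjoin A x"
    using in_span[OF finite.insertI[OF finB]] span by blast
  moreover have "card (insert x B) = Suc j" using B(3) finB xB by simp
  ultimately show ?thesis unfolding has_dim_def by blast
qed

lemma has_dim_meet_Suc:
  assumes sA: "is_subspace n A" and sC: "is_subspace n C" and sD: "is_subspace n D"
    and dA: "has_dim A (Suc j)" and dC: "has_dim C (Suc j)" and dD: "has_dim D (Suc (Suc j))"
    and ne: "A \<noteq> C" and AD: "A \<subseteq> D" and CD: "C \<subseteq> D"
  shows "has_dim (A \<inter> C) j"
proof -
  obtain x where x: "x \<in> A" "x \<notin> C" using has_dim_subset_eq dA dC ne by blast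
  have "adjoin C x = D"
    using has_dim_subset_eq[OF has_dim_adjoin[OF dC x(2)] dD] adjoin_subset[OF sD CD] x AD by blast
  obtain d where d: "has_dim (A \<inter> C) d" using subspace_has_dim[OF subspace_Int[OF sA sC]] .
  have "A \<subseteq> adjoin (A \<inter> C) x"
  proof
    fix h assume h: "h \<in> A"
    then have "h \<in> adjoin C x" using \<open>adjoin C x = D\<close> AD by blast
    then obtain a c where ac: "a \<in> C" "h = (\<lambda>i. a i + c * x i)" by (rule adjoinE)
    have "a = (\<lambda>i. h i + (- c) * x i)" using ac by auto
    then have "a \<in> A" using subspace_add_scale[OF sA h x(1), of "- c"] by simp
    then show "h \<in> adjoin (A \<inter> C) x" using ac by (blast intro: adjoinI)
  qed
  moreover have "has_dim (adjoin (A \<inter> C) x) (Suc d)" using has_dim_adjoin[OF d] x(2) by blast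
  ultimately have "Suc j \<le> Suc d" using has_dim_mono[OF dA] by blast
  moreover have "A \<inter> C \<subset> A" using x by blast
  then have "d < Suc j" using has_dim_strict_mono[OF d dA] by blast
  ultimately have "d = j" by linarith
  then show ?thesis using d by simp
qed

lemma has_dim_join_Suc:
  assumes sA: "is_subspace n A" and sC: "is_subspace n C"
    and dA: "has_dim A (Suc j)" and dC: "has_dim C (Suc j)" and dK: "has_dim K j"
    and ne: "A \<noteq> C" and KA: "K \<subseteq> A" and KC: "K \<subseteq> C"
  obtains D where "is_subspace n D" "has_dim D (Suc (Suc j))" "A \<subseteq> D" "C \<subseteq> D"
    "\<And>S. is_subspace n S \<Longrightarrow> A \<subseteq> S \<Longrightarrow> C \<subseteq> S \<Longrightarrow> D \<subseteq> S"
proof -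
  obtain y where y: "y \<in> C" "y \<notin> A" using has_dim_subset_eq dA dC ne by blast
  have sD: "is_subspace n (adjoin A y)"
    using subspace_adjoin[OF sA] y(1) subspace_vspace[OF sC] by blast
  have "K \<subset> adjoin A y \<inter> C"
    using KC KA subset_adjoin[of A y] mem_adjoin[OF sA, of y] y by blast
  then have "C \<subseteq> adjoin A y"
    by (rule has_dim_Suc_subsetI[OF sD sC dK dC])
  then show ?thesis
    using that[OF sD has_dim_adjoin[OF dA y(2)] subset_adjoin] adjoin_subset y(1) by blast
qed

section \<open>Pencils and planes of the Grassmann space\<close>

lemma Sub_iff: "U \<in> Sub n j \<longleftrightarrow> is_subspace n U \<and> has_dim U j"
  by (simp add: Sub_def)

lemma kpencil_iff: "U \<in> kpencil n k H B \<longleftrightarrow> U \<in> Sub n k \<and> H \<subseteq> U \<and> U \<subseteq> B"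
  by (simp add: kpencil_def)

text \<open>\<open>kpencil n k Y Z\<close> is the set of \<open>k\<close>-spaces between \<open>Y\<close> and \<open>Z\<close> whatever the dimensions
  of \<open>Y\<close> and \<open>Z\<close>, so planes are of this form too.\<close>
lemma kplane_iff:
  "kplane n k P \<longleftrightarrow> (\<exists>Y Z. Y \<subseteq> Z \<and>
      ((Y \<in> Sub n (k - 2) \<and> Z \<in> Sub n (k + 1)) \<or> (Y \<in> Sub n (k - 1) \<and> Z \<in> Sub n (k + 2))) \<and>
      P = kpencil n k Y Z)"
  by (simp add: kplane_def kpencil_def)

lemma kpencil_vertex_eq_Int:
  assumes "H \<in> Sub n (k - 1)" "a \<in> kpencil n k H B" "b \<in> kpencil n k H B" "a \<noteq> b" "1 \<le> k"
  shows "H = a \<inter> b"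
proof -
  have a: "is_subspace n a" "has_dim a (Suc (k - 1))" and b: "is_subspace n b" "has_dim b k"
    using assms by (auto simp: kpencil_iff Sub_iff)
  have "a \<inter> b \<noteq> a" using has_dim_subset_eq a(2) b(2) assms(4,5) by fastforce
  then show ?thesis
    using has_dim_Suc_between[OF subspace_Int[OF a(1) b(1)] _ a(2)] assms(1-3)
    by (auto simp: kpencil_iff Sub_iff)
qed

lemma kpencil_base_subset:
  assumes "B \<in> Sub n (k + 1)" "a \<in> kpencil n k H B" "b \<in> kpencil n k H B" "a \<noteq> b"
    and "is_subspace n Z" "a \<subseteq> Z" "b \<subseteq> Z"
  shows "B \<subseteq> Z"
proof -
  have a: "has_dim a k" "a \<subseteq> B" and b: "has_dim b k" "b \<subseteq> B"
    using assms(2,3) by (auto simp: kpencil_iff Sub_iff)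
  have "\<not> b \<subseteq> a" using has_dim_subset_eq a(1) b(1) assms(4) by blast
  then have "a \<subset> Z \<inter> B" using a(2) b(2) assms(6,7) by blast
  then show ?thesis using has_dim_Suc_subsetI[OF assms(5) _ a(1)] assms(1) by (simp add: Sub_iff)
qed

lemma kpencil_mono: "Y \<subseteq> H \<Longrightarrow> B \<subseteq> Z \<Longrightarrow> kpencil n k H B \<subseteq> kpencil n k Y Z"
  unfolding kpencil_def by blast

lemma kpencil_subset_kpencil:
  assumes "H \<in> Sub n (k - 1)" "B \<in> Sub n (k + 1)" "is_subspace n Z" "1 \<le> k"
    and "a \<noteq> b" "a \<in> kpencil n k H B" "b \<in> kpencil n k H B" "a \<in> kpencil n k Y Z" "b \<in> kpencil n k Y Z"
  shows "Y \<subseteq> H" "B \<subseteq> Z" "kpencil n k H B \<subseteq> kpencil n k Y Z"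
proof -
  show "Y \<subseteq> H"
    using kpencil_vertex_eq_Int[OF assms(1,6,7,5,4)] assms(8,9) by (auto simp: kpencil_iff)
  moreover show "B \<subseteq> Z"
    using kpencil_base_subset[OF assms(2,6,7,5,3)] assms(8,9) by (auto simp: kpencil_iff)
  ultimately show "kpencil n k H B \<subseteq> kpencil n k Y Z" by (rule kpencil_mono)
qed

lemma kpencil_unique:
  assumes "is_kpencil n k l1" "is_kpencil n k l2" "1 \<le> k"
    and "a \<noteq> b" "a \<in> l1" "b \<in> l1" "a \<in> l2" "b \<in> l2"
  shows "l1 = l2"
proof -
  obtain H1 B1 where 1: "H1 \<in> Sub n (k - 1)" "B1 \<in> Sub n (k + 1)" "l1 = kpencil n k H1 B1"
    using assms(1) is_kpencil_def by blast
  obtain H2 B2 where 2: "H2 \<in> Sub n (k - 1)" "B2 \<in> Sub n (k + 1)" "l2 = kpencil n k H2 B2"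
    using assms(2) is_kpencil_def by blast
  have "l1 \<subseteq> l2" using kpencil_subset_kpencil(3)[OF 1(1,2) _ assms(3,4)] 1 2 assms(5-8)
    by (simp add: Sub_iff)
  moreover have "l2 \<subseteq> l1" using kpencil_subset_kpencil(3)[OF 2(1,2) _ assms(3,4)] 1 2 assms(5-8)
    by (simp add: Sub_iff)
  ultimately show ?thesis by blast
qed

lemma line_two_points:
  assumes "L \<in> lines n k W m"
  obtains a b where "a \<noteq> b" "a \<in> L" "b \<in> L"
  using assms unfolding lines_def by blast

lemma line_point_ne:
  assumes "L \<in> lines n k W m"
  obtains a where "a \<in> L" "a \<noteq> U"
  using line_two_points[OF assms] by metis

lemma lines_subset_pts: "L \<in> lines n k W m \<Longrightarrow> L \<subseteq> pts n k W m"
  unfolding lines_def by blast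

lemma line_lclos:
  assumes "L \<in> lines n k W m" "1 \<le> k"
  shows "is_kpencil n k (lclos n k L)" "L = lclos n k L \<inter> pts n k W m"
proof -
  obtain l where l: "L = l \<inter> pts n k W m" "is_kpencil n k l"
    using assms(1) unfolding lines_def by blast
  obtain a b where ab: "a \<noteq> b" "a \<in> L" "b \<in> L" using line_two_points[OF assms(1)] .
  have "lclos n k L = l"
    unfolding lclos_def
    using l kpencil_unique[OF _ l(2) assms(2) ab(1)] ab(2,3) by (intro the_equality) blast+
  then show "is_kpencil n k (lclos n k L)" "L = lclos n k L \<inter> pts n k W m"
    using l by simp_all
qed

lemma line_subset_lclos: "L \<in> lines n k W m \<Longrightarrow> 1 \<le> k \<Longrightarrow> L \<subseteq> lclos n k L"
  using line_lclos(2) by blast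

lemma lclos_eq_imp_line_eq:
  "L1 \<in> lines n k W m \<Longrightarrow> L2 \<in> lines n k W m \<Longrightarrow> 1 \<le> k \<Longrightarrow> lclos n k L1 = lclos n k L2
    \<Longrightarrow> L1 = L2"
  using line_lclos(2) by metis

lemma line_lclos_kpencil:
  assumes "L \<in> lines n k W m" "1 \<le> k"
  obtains H B where "lclos n k L = kpencil n k H B" "H \<in> Sub n (k - 1)" "B \<in> Sub n (k + 1)"
    "H \<subseteq> B"
  using line_lclos(1)[OF assms] unfolding is_kpencil_def by blast

lemma line_in_kpencil:
  assumes "L \<in> lines n k W m" "1 \<le> k" "is_subspace n Z" "L \<subseteq> kpencil n k Y Z"
  obtains H B where "lclos n k L = kpencil n k H B" "H \<in> Sub n (k - 1)" "B \<in> Sub n (k + 1)"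
    "H \<subseteq> B" "Y \<subseteq> H" "B \<subseteq> Z"
proof -
  obtain H B where HB: "lclos n k L = kpencil n k H B" "H \<in> Sub n (k - 1)" "B \<in> Sub n (k + 1)"
    "H \<subseteq> B"
    using line_lclos_kpencil[OF assms(1,2)] .
  obtain a b where ab: "a \<noteq> b" "a \<in> L" "b \<in> L" using line_two_points[OF assms(1)] .
  have "a \<in> kpencil n k H B" "b \<in> kpencil n k H B"
    using ab line_subset_lclos[OF assms(1,2)] HB(1) by auto
  then show ?thesis
    using that[OF HB] kpencil_subset_kpencil(1,2)[OF HB(2,3) assms(3,2) ab(1)] ab assms(4) by blast
qed

lemma line_subset_pts_Int:
  "L \<in> lines n k W m \<Longrightarrow> 1 \<le> k \<Longrightarrow> lclos n k L \<subseteq> P \<Longrightarrow> L \<subseteq> P \<inter> pts n k W m"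
  using line_lclos(2) by blast

lemma lclos_Int_unique:
  assumes "L1 \<in> lines n k W m" "L2 \<in> lines n k W m" "1 \<le> k" "L1 \<noteq> L2"
    and "U \<in> lclos n k L1" "U \<in> lclos n k L2" "a \<in> lclos n k L1" "a \<in> lclos n k L2"
  shows "a = U"
  using kpencil_unique[OF line_lclos(1)[OF assms(1,3)] line_lclos(1)[OF assms(2,3)] assms(3)]
    lclos_eq_imp_line_eq[OF assms(1-3)] assms(4-8) by blast

lemma mplane_over_kplane:
  assumes "kplane n k P" "1 \<le> k" "L1 \<in> lines n k W m" "L2 \<in> lines n k W m" "L1 \<noteq> L2"
    "lclos n k L1 \<subseteq> P" "lclos n k L2 \<subseteq> P"
  shows "mplane_over n k W m P (P \<inter> pts n k W m)"
proof -
  have "L1 \<subseteq> P \<inter> pts n k W m" "L2 \<subseteq> P \<inter> pts n k W m"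
    using line_subset_pts_Int[OF assms(3,2,6)] line_subset_pts_Int[OF assms(4,2,7)] .
  then show ?thesis unfolding mplane_over_def using assms(1,3-5) by blast
qed

lemma kplane_kpencils_meet:
  assumes k: "1 < k" and YZ: "(Y \<in> Sub n (k - 2) \<and> Z \<in> Sub n (k + 1)) \<or> (Y \<in> Sub n (k - 1) \<and> Z \<in> Sub n (k + 2))"
    and p1: "H1 \<in> Sub n (k - 1)" "B1 \<in> Sub n (k + 1)" "Y \<subseteq> H1" "B1 \<subseteq> Z" "H1 \<subseteq> B1"
    and p2: "H2 \<in> Sub n (k - 1)" "B2 \<in> Sub n (k + 1)" "Y \<subseteq> H2" "B2 \<subseteq> Z" "H2 \<subseteq> B2"
    and ne: "kpencil n k H1 B1 \<noteq> kpencil n k H2 B2"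
  obtains U where "U \<in> kpencil n k H1 B1" "U \<in> kpencil n k H2 B2"
  using YZ
proof
  assume d: "Y \<in> Sub n (k - 2) \<and> Z \<in> Sub n (k + 1)"
  then have BZ: "B1 = Z" "B2 = Z" using has_dim_subset_eq p1 p2 by (metis Sub_iff)+
  then have "H1 \<noteq> H2" using ne by auto
  moreover have "k - 1 = Suc (k - 2)" using k by simp
  ultimately obtain D where D: "is_subspace n D" "has_dim D (Suc (Suc (k - 2)))" "H1 \<subseteq> D" "H2 \<subseteq> D"
      "\<And>S. is_subspace n S \<Longrightarrow> H1 \<subseteq> S \<Longrightarrow> H2 \<subseteq> S \<Longrightarrow> D \<subseteq> S"
    using has_dim_join_Suc[of n H1 H2 "k - 2" Y] p1 p2 d by (auto simp: Sub_iff)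
  have "D \<subseteq> Z" using D(5) d p1(5) p2(5) BZ by (auto simp: Sub_iff)
  moreover have "D \<in> Sub n k" using D k by (auto simp: Sub_iff Suc_diff_Suc numeral_2_eq_2)
  ultimately show thesis using that D BZ by (auto simp: kpencil_iff)
next
  assume d: "Y \<in> Sub n (k - 1) \<and> Z \<in> Sub n (k + 2)"
  then have HY: "H1 = Y" "H2 = Y" using has_dim_subset_eq p1 p2 by (metis Sub_iff)+
  then have "B1 \<noteq> B2" using ne by auto
  then have "has_dim (B1 \<inter> B2) k"
    using has_dim_meet_Suc[of n B1 B2 Z k] p1 p2 d by (auto simp: Sub_iff)
  then have "B1 \<inter> B2 \<in> Sub n k" using subspace_Int p1 p2 by (auto simp: Sub_iff)
  then show thesis using that p1(5) p2(5) HY by (auto simp: kpencil_iff)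
qed

lemma kpencils_coplanar:
  assumes k: "1 < k"
    and p1: "H1 \<in> Sub n (k - 1)" "B1 \<in> Sub n (k + 1)" "H1 \<subseteq> B1"
    and p2: "H2 \<in> Sub n (k - 1)" "B2 \<in> Sub n (k + 1)" "H2 \<subseteq> B2"
    and U: "U \<in> kpencil n k H1 B1" "U \<in> kpencil n k H2 B2"
    and ne: "kpencil n k H1 B1 \<noteq> kpencil n k H2 B2"
    and common: "H1 = H2 \<or> B1 = B2"
  obtains P where "kplane n k P" "kpencil n k H1 B1 \<subseteq> P" "kpencil n k H2 B2 \<subseteq> P"
proof (cases "H1 = H2")
  case True
  then have "B1 \<noteq> B2" using ne by auto
  moreover have U': "has_dim U k" "U \<subseteq> B1" "U \<subseteq> B2"
    using U by (auto simp: kpencil_iff Sub_iff)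
  moreover have B': "is_subspace n B1" "is_subspace n B2" "has_dim B1 (Suc k)" "has_dim B2 (Suc k)"
    using p1(2) p2(2) by (simp_all add: Sub_iff)
  ultimately obtain D where D: "is_subspace n D" "has_dim D (Suc (Suc k))" "B1 \<subseteq> D" "B2 \<subseteq> D"
    using has_dim_join_Suc[of n B1 B2 k U] by metis
  have "kplane n k (kpencil n k H1 D)"
    unfolding kplane_iff using p1 D by (intro exI[of _ H1] exI[of _ D]) (auto simp: Sub_iff)
  moreover have "kpencil n k H1 B1 \<subseteq> kpencil n k H1 D" "kpencil n k H2 B2 \<subseteq> kpencil n k H1 D"
    using D(3,4) True by (simp_all add: kpencil_mono)
  ultimately show thesis by (rule that)
next
  case False
  then have B: "B1 = B2" using common by simp
  have "is_subspace n U" "has_dim U (Suc (Suc (k - 2)))" "H1 \<subseteq> U" "H2 \<subseteq> U"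
    using U k by (auto simp: kpencil_iff Sub_iff Suc_diff_Suc numeral_2_eq_2)
  moreover have "k - 1 = Suc (k - 2)" using k by simp
  ultimately have "has_dim (H1 \<inter> H2) (k - 2)"
    using has_dim_meet_Suc[of n H1 H2 U "k - 2"] p1 p2 False by (auto simp: Sub_iff)
  then have Y: "H1 \<inter> H2 \<in> Sub n (k - 2)" using subspace_Int p1 p2 by (auto simp: Sub_iff)
  have "kplane n k (kpencil n k (H1 \<inter> H2) B1)"
    unfolding kplane_iff using p1 Y by (intro exI[of _ "H1 \<inter> H2"] exI[of _ B1]) auto
  moreover have "kpencil n k H1 B1 \<subseteq> kpencil n k (H1 \<inter> H2) B1"
      "kpencil n k H2 B2 \<subseteq> kpencil n k (H1 \<inter> H2) B1"
    using B by (simp_all add: kpencil_mono)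
  ultimately show thesis by (rule that)
qed

lemma kpencils_triangle_same_base:
  assumes k: "1 < k"
    and p1: "H1 \<in> Sub n (k - 1)" "B1 \<in> Sub n (k + 1)"
    and p2: "H2 \<in> Sub n (k - 1)" "B2 \<in> Sub n (k + 1)"
    and p: "B \<in> Sub n (k + 1)"
    and U: "U \<in> kpencil n k H1 B1" "U \<in> kpencil n k H2 B2"
    and a: "a \<in> kpencil n k H1 B1" "a \<noteq> U" "a \<in> kpencil n k H B"
    and b: "b \<in> kpencil n k H2 B2" "b \<noteq> U" "b \<in> kpencil n k H B"
    and ne: "H1 \<noteq> H2"
  shows "B1 = B2"
proof -
  have U': "is_subspace n U" "has_dim U (Suc (k - 1))" "U \<subseteq> B1" "U \<subseteq> B2" "H1 \<subseteq> U" "H2 \<subseteq> U"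
    using U k by (auto simp: kpencil_iff Sub_iff)
  have a': "has_dim a k" "a \<subseteq> B" "a \<subseteq> B1" "H1 \<subseteq> a" and b': "has_dim b k" "b \<subseteq> B" "b \<subseteq> B2" "H2 \<subseteq> b"
    using a b by (auto simp: kpencil_iff Sub_iff)
  have sB: "is_subspace n B" and dB: "has_dim B (Suc k)" using p by (auto simp: Sub_iff)
  have "\<not> H2 \<subseteq> H1" using has_dim_subset_eq p1(1) p2(1) ne by (metis Sub_iff)
  then have "H1 \<subset> B \<inter> U" using U' a' b' by blast
  then have UB: "U \<subseteq> B" using has_dim_Suc_subsetI[OF sB U'(1) _ U'(2)] p1(1) by (auto simp: Sub_iff)
  have dU: "has_dim U k" using U'(2) k by simp
  have base_eq: "Bi = B" if "Bi \<in> Sub n (k + 1)" "c \<in> Sub n k" "c \<subseteq> B" "c \<subseteq> Bi" "U \<subseteq> Bi" "c \<noteq> U"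
    for Bi c
  proof -
    have "\<not> c \<subseteq> U" using has_dim_subset_eq dU that(2,6) by (metis Sub_iff)
    then have "U \<subset> B \<inter> Bi" using UB that(3-5) by blast
    then have "Bi \<subseteq> B" using has_dim_Suc_subsetI[OF sB _ dU] that(1) by (auto simp: Sub_iff)
    then show ?thesis using has_dim_subset_eq dB that(1) by (auto simp: Sub_iff)
  qed
  show "B1 = B2"
    using base_eq[of B1 a] base_eq[of B2 b] p1(2) p2(2) a b a' b' U' by (auto simp: kpencil_iff)
qed

section \<open>Cliques of lines in the spine space\<close>

lemma semibundle_kpencils_coplanar:
  assumes k: "1 < k" and X: "strong_subspace n k W m X"
    and L1: "L1 \<in> semibundle n k W m X U" and L2: "L2 \<in> semibundle n k W m X U" and ne: "L1 \<noteq> L2"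
  obtains P where "kplane n k P" "lclos n k L1 \<subseteq> P" "lclos n k L2 \<subseteq> P"
proof -
  have k1: "1 \<le> k" using k by simp
  have L1': "L1 \<in> lines n k W m" "U \<in> lclos n k L1" "L1 \<subseteq> X"
    and L2': "L2 \<in> lines n k W m" "U \<in> lclos n k L2" "L2 \<subseteq> X"
    using L1 L2 by (auto simp: semibundle_def)
  obtain H1 B1 where p1: "lclos n k L1 = kpencil n k H1 B1" "H1 \<in> Sub n (k - 1)" "B1 \<in> Sub n (k + 1)"
      "H1 \<subseteq> B1"
    using line_lclos_kpencil[OF L1'(1) k1] .
  obtain H2 B2 where p2: "lclos n k L2 = kpencil n k H2 B2" "H2 \<in> Sub n (k - 1)" "B2 \<in> Sub n (k + 1)"
      "H2 \<subseteq> B2"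
    using line_lclos_kpencil[OF L2'(1) k1] .
  obtain a where a: "a \<in> L1" "a \<noteq> U" using line_point_ne[OF L1'(1)] .
  obtain b where b: "b \<in> L2" "b \<noteq> U" using line_point_ne[OF L2'(1)] .
  have a': "a \<in> lclos n k L1" and b': "b \<in> lclos n k L2"
    using a(1) b(1) line_subset_lclos L1'(1) L2'(1) k1 by blast+
  have "a \<noteq> b" using lclos_Int_unique[OF L1'(1) L2'(1) k1 ne L1'(2) L2'(2) a'] b' a(2) by blast
  then obtain L where L: "L \<in> lines n k W m" "a \<in> L" "b \<in> L"
    using X a(1) b(1) L1'(3) L2'(3) unfolding strong_subspace_def by blast
  obtain H B where p: "lclos n k L = kpencil n k H B" "B \<in> Sub n (k + 1)"
    using line_lclos_kpencil[OF L(1) k1] by metis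
  have "a \<in> kpencil n k H B" "b \<in> kpencil n k H B"
    using L(2,3) line_subset_lclos[OF L(1) k1] p(1) by auto
  then have "H1 = H2 \<or> B1 = B2"
    using kpencils_triangle_same_base[OF k p1(2,3) p2(2,3) p(2), of U a H b] L1'(2) L2'(2) p1(1) p2(1)
      a' b' a(2) b(2) by auto
  then show ?thesis
    using kpencils_coplanar[OF k p1(2-4) p2(2-4)] that L1'(2) L2'(2) p1(1) p2(1)
      lclos_eq_imp_line_eq[OF L1'(1) L2'(1) k1] ne by metis
qed

lemma mplane_over_lines_meet:
  assumes k: "1 < k" and E: "mplane_over n k W m P E"
    and L1: "L1 \<in> lines n k W m" "L1 \<subseteq> E" and L2: "L2 \<in> lines n k W m" "L2 \<subseteq> E"
    and ne: "L1 \<noteq> L2"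
  obtains U where "U \<in> lclos n k L1" "U \<in> lclos n k L2" "lclos n k L1 \<subseteq> P" "lclos n k L2 \<subseteq> P"
proof -
  have k1: "1 \<le> k" using k by simp
  obtain Y Z where YZ: "Y \<subseteq> Z" "P = kpencil n k Y Z"
      "(Y \<in> Sub n (k - 2) \<and> Z \<in> Sub n (k + 1)) \<or> (Y \<in> Sub n (k - 1) \<and> Z \<in> Sub n (k + 2))"
    using E unfolding mplane_over_def kplane_iff by blast
  have sZ: "is_subspace n Z" using YZ(3) by (auto simp: Sub_iff)
  have in_P: "L1 \<subseteq> kpencil n k Y Z" "L2 \<subseteq> kpencil n k Y Z"
    using L1(2) L2(2) E YZ(2) unfolding mplane_over_def by blast+
  obtain H1 B1 where
      p1: "lclos n k L1 = kpencil n k H1 B1" "H1 \<in> Sub n (k - 1)" "B1 \<in> Sub n (k + 1)" "H1 \<subseteq> B1"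
        "Y \<subseteq> H1" "B1 \<subseteq> Z"
    by (rule line_in_kpencil[OF L1(1) k1 sZ in_P(1)])
  obtain H2 B2 where
      p2: "lclos n k L2 = kpencil n k H2 B2" "H2 \<in> Sub n (k - 1)" "B2 \<in> Sub n (k + 1)" "H2 \<subseteq> B2"
        "Y \<subseteq> H2" "B2 \<subseteq> Z"
    by (rule line_in_kpencil[OF L2(1) k1 sZ in_P(2)])
  have "kpencil n k H1 B1 \<noteq> kpencil n k H2 B2"
    using lclos_eq_imp_line_eq[OF L1(1) L2(1) k1] ne p1(1) p2(1) by metis
  then obtain U where "U \<in> kpencil n k H1 B1" "U \<in> kpencil n k H2 B2"
    using kplane_kpencils_meet[OF k YZ(3) p1(2,3,5,6,4) p2(2,3,5,6,4)] by blast
  moreover have "lclos n k L1 \<subseteq> P" "lclos n k L2 \<subseteq> P"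
    using kpencil_mono p1(1,5,6) p2(1,5,6) YZ(2) by simp_all
  ultimately show ?thesis using that p1(1) p2(1) by simp
qed

lemma flat_pi_clique: "mplane n k W m E \<Longrightarrow> clique (pi_rel n k W m) (flat n k W m E)"
  unfolding clique_def flat_def pi_rel_def by blast

lemma semibundle_lines_mplane_over:
  assumes k: "1 < k" and X: "strong_subspace n k W m X"
    and L: "L1 \<in> semibundle n k W m X U" "L2 \<in> semibundle n k W m X U" "L1 \<noteq> L2"
  obtains P where "mplane_over n k W m P (P \<inter> pts n k W m)"
    "lclos n k L1 \<subseteq> P" "lclos n k L2 \<subseteq> P"
proof -
  obtain P where P: "kplane n k P" "lclos n k L1 \<subseteq> P" "lclos n k L2 \<subseteq> P"
    using semibundle_kpencils_coplanar[OF k X L] .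
  have lines: "L1 \<in> lines n k W m" "L2 \<in> lines n k W m" using L by (auto simp: semibundle_def)
  show ?thesis
    using that[OF mplane_over_kplane[OF P(1) _ lines L(3) P(2,3)]] P(2,3) k by simp
qed

lemma semibundle_pi_clique:
  assumes "1 < k" "strong_subspace n k W m X"
  shows "clique (pi_rel n k W m) (semibundle n k W m X U)"
  unfolding clique_def
proof (intro ballI impI)
  fix L1 L2 assume L: "L1 \<in> semibundle n k W m X U" "L2 \<in> semibundle n k W m X U" "L1 \<noteq> L2"
  then obtain P where P: "mplane_over n k W m P (P \<inter> pts n k W m)"
      "lclos n k L1 \<subseteq> P" "lclos n k L2 \<subseteq> P"
    using semibundle_lines_mplane_over[OF assms] by blast
  have lines: "L1 \<in> lines n k W m" "L2 \<in> lines n k W m" using L by (auto simp: semibundle_def)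
  moreover have "L1 \<subseteq> P \<inter> pts n k W m" "L2 \<subseteq> P \<inter> pts n k W m"
    using line_subset_pts_Int[OF lines(1) _ P(2)] line_subset_pts_Int[OF lines(2) _ P(3)] assms(1)
    by simp_all
  ultimately show "pi_rel n k W m L1 L2" unfolding pi_rel_def mplane_def using P(1) by blast
qed

lemma proper_semibundle_rho_clique:
  assumes "1 < k" "strong_subspace n k W m X" "U \<in> pts n k W m"
  shows "clique (rho_rel n k W m) (semibundle n k W m X U)"
  unfolding clique_def
proof (intro ballI impI)
  fix L1 L2 assume L: "L1 \<in> semibundle n k W m X U" "L2 \<in> semibundle n k W m X U" "L1 \<noteq> L2"
  then obtain P where P: "mplane_over n k W m P (P \<inter> pts n k W m)"
      "lclos n k L1 \<subseteq> P" "lclos n k L2 \<subseteq> P"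
    using semibundle_lines_mplane_over[OF assms(1,2)] by blast
  have "L1 \<in> line_pencil n k W m P U" "L2 \<in> line_pencil n k W m P U"
    using L P(2,3) unfolding semibundle_def line_pencil_def by blast+
  moreover have "U \<in> P" using L P(2) unfolding semibundle_def by blast
  ultimately show "rho_rel n k W m L1 L2" unfolding rho_rel_def using P(1) assms(3) by blast
qed

lemma semiflat_rho_clique:
  assumes k: "1 < k" and F: "semiflat_on n k W m E F"
  shows "clique (rho_rel n k W m) F"
  unfolding clique_def
proof (intro ballI impI)
  obtain P where P: "mplane_over n k W m P E" using F unfolding semiflat_on_def mplane_def by blast
  obtain A where A: "nonpar_aff n k W m E A"
      "F = {L \<in> lines n k W m. proj_line n k W m L \<and> L \<subseteq> E} \<union> A"
    using F unfolding semiflat_on_def by blast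
  have inF: "L \<in> lines n k W m \<and> L \<subseteq> E \<and> (proj_line n k W m L \<or> L \<in> A)" if "L \<in> F" for L
    using that A unfolding nonpar_aff_def aff_line_def by blast
  fix L1 L2 assume L: "L1 \<in> F" "L2 \<in> F" "L1 \<noteq> L2"
  obtain U where U: "U \<in> lclos n k L1" "U \<in> lclos n k L2" "lclos n k L1 \<subseteq> P" "lclos n k L2 \<subseteq> P"
    using mplane_over_lines_meet[OF k P _ _ _ _ L(3)] inF[OF L(1)] inF[OF L(2)] by blast
  have "U \<in> pts n k W m"
  proof (cases "proj_line n k W m L1 \<or> proj_line n k W m L2")
    case True
    then have "U \<in> L1 \<or> U \<in> L2" using U(1,2) unfolding proj_line_def by auto
    then show ?thesis using lines_subset_pts inF[OF L(1)] inF[OF L(2)] by blast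
  next
    case False
    then have "L1 \<in> A" "L2 \<in> A" using inF L by blast+
    then have "\<not> parallel n k W m L1 L2" "aff_line n k W m L1" "aff_line n k W m L2"
      using A(1) L(3) unfolding nonpar_aff_def by blast+
    then show ?thesis using U unfolding parallel_def by blast
  qed
  moreover have "L1 \<in> line_pencil n k W m P U" "L2 \<in> line_pencil n k W m P U"
    using inF L U unfolding line_pencil_def by blast+
  ultimately show "rho_rel n k W m L1 L2" unfolding rho_rel_def using P U(1,3) by blast
qed

theorem lemma2p1:
  fixes W :: "('a::division_ring) vec set" and n k m w :: nat
  assumes "n \<ge> 3" and "1 < k" and "k + 1 < n"
    and "is_subspace n W" and "has_dim W w"
    and "int k - (int n - int w) \<le> int m" and "m \<le> k" and "m \<le> w"
  shows "(\<forall>E. mplane n k W m E \<longrightarrow> clique (pi_rel n k W m) (flat n k W m E))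
       \<and> (\<forall>X U. strong_subspace n k W m X \<and> U \<in> pclos n k X \<longrightarrow>
              clique (pi_rel n k W m) (semibundle n k W m X U))
       \<and> (\<forall>E F. semiflat_on n k W m E F \<longrightarrow> clique (rho_rel n k W m) F)
       \<and> (\<forall>X U. strong_subspace n k W m X \<and> U \<in> pclos n k X \<and> U \<in> pts n k W m \<longrightarrow>
              clique (rho_rel n k W m) (semibundle n k W m X U))"
  \<comment> \<open>only \<open>1 < k\<close> is needed, and the vertex of a semibundle need not lie in the closure of \<open>X\<close>\<close>
  using flat_pi_clique semibundle_pi_clique[OF assms(2)] semiflat_rho_clique[OF assms(2)]
    proper_semibundle_rho_clique[OF assms(2)]
  by blast

end
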